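(* Let $\pi\in H(\mathbb{Z})$ with $\pi\pi^*=p$ a prime, $p\ge 13$, and let $C$ be an $(n,k)$ linear code over $H(\mathbb{Z})_\pi$. If $C$ corrects all errors of Lipschitz weight $2$ or less, then $(p^2)^{n-k}\ge 32n^2+8n+1$.
   Context: $H(\mathbb{Z})=\{a_0+a_1e_1+a_2e_2+a_3e_3:a_i\in\mathbb{Z}\}$ (Lipschitz integers) with quaternion multiplication $e_1^2=e_2^2=e_3^2=-1$, $e_1e_2=-e_2e_1=e_3$, $e_3e_1=-e_1e_3=e_2$, $e_2e_3=-e_3e_2=e_1$; $q^*=a_0-a_1e_1-a_2e_2-a_3e_3$, $N(q)=qq^*$. Right congruence: $q_1\equiv_r q_2 \pmod\pi$ iff $q_1-q_2=\delta\pi$ for some $\delta\in H(\mathbb{Z})$; $H(\mathbb{Z})_\pi=H(\mathbb{Z})/H(\mathbb{Z})\pi$, which has $p^2$ elements. The Lipschitz weight of a class $\gamma$ is $\min\{|a_0|+|a_1|+|a_2|+|a_3| : a_0+a_1e_1+a_2e_2+a_3e_3\in\gamma\}$; the weight of a vector is the sum of the weights of its components. An $(n,k)$ linear code over $H(\mathbb{Z})_\pi$ is an additive subgroup $C\subseteq H(\mathbb{Z})_\pi^n$ such that $H(\mathbb{Z})_\pi^n/C$ has exactly $(p^2)^{n-k}$ cosets. $C$ corrects all errors of weight $t$ or less if all vectors of Lipschitz weight at most $t$ lie in pairwise distinct cosets of $C$. *)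

theory Defs
  imports Main "HOL-Computational_Algebra.Primes"
begin

text \<open>Lipschitz integers a0 + a1 e1 + a2 e2 + a3 e3, represented as integer 4-tuples.\<close>
type_synonym lip = "int \<times> int \<times> int \<times> int"

definition lzero :: lip where "lzero = (0, 0, 0, 0)"

definition ladd :: "lip \<Rightarrow> lip \<Rightarrow> lip" where
  "ladd x y = (case x of (a0, a1, a2, a3) \<Rightarrow> case y of (b0, b1, b2, b3) \<Rightarrow>
     (a0 + b0, a1 + b1, a2 + b2, a3 + b3))"

definition lneg :: "lip \<Rightarrow> lip" where
  "lneg x = (case x of (a0, a1, a2, a3) \<Rightarrow> (- a0, - a1, - a2, - a3))"

text \<open>Hamilton product with e1^2=e2^2=e3^2=-1, e1e2=e3, e2e3=e1, e3e1=e2.\<close>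
definition lmult :: "lip \<Rightarrow> lip \<Rightarrow> lip" where
  "lmult x y = (case x of (a0, a1, a2, a3) \<Rightarrow> case y of (b0, b1, b2, b3) \<Rightarrow>
     (a0*b0 - a1*b1 - a2*b2 - a3*b3,
      a0*b1 + a1*b0 + a2*b3 - a3*b2,
      a0*b2 - a1*b3 + a2*b0 + a3*b1,
      a0*b3 + a1*b2 - a2*b1 + a3*b0))"

definition lconj :: "lip \<Rightarrow> lip" where
  "lconj x = (case x of (a0, a1, a2, a3) \<Rightarrow> (a0, - a1, - a2, - a3))"

definition rcong :: "lip \<Rightarrow> lip \<Rightarrow> lip \<Rightarrow> bool" where
  "rcong pi q1 q2 \<longleftrightarrow> (\<exists>\<delta>. ladd q1 (lneg q2) = lmult \<delta> pi)"

definition lclass :: "lip \<Rightarrow> lip \<Rightarrow> lip set" where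
  "lclass pi q = {r. rcong pi r q}"

text \<open>The quotient H(Z)_pi = H(Z)/H(Z)pi, as the set of right congruence classes.\<close>
definition Hpi :: "lip \<Rightarrow> lip set set" where
  "Hpi pi = range (lclass pi)"

definition cadd :: "lip set \<Rightarrow> lip set \<Rightarrow> lip set" where
  "cadd X Y = {ladd x y | x y. x \<in> X \<and> y \<in> Y}"

definition labsw :: "lip \<Rightarrow> nat" where
  "labsw x = (case x of (a0, a1, a2, a3) \<Rightarrow> nat \<bar>a0\<bar> + nat \<bar>a1\<bar> + nat \<bar>a2\<bar> + nat \<bar>a3\<bar>)"

definition cweight :: "lip set \<Rightarrow> nat" where
  "cweight \<gamma> = (LEAST w. \<exists>q\<in>\<gamma>. labsw q = w)"

text \<open>Vectors of length n over H(Z)_pi: functions on indices, extensional outside {0..<n}.\<close>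
definition Vn :: "lip \<Rightarrow> nat \<Rightarrow> (nat \<Rightarrow> lip set) set" where
  "Vn pi n = {v. (\<forall>i<n. v i \<in> Hpi pi) \<and> (\<forall>i\<ge>n. v i = lclass pi lzero)}"

definition vadd :: "(nat \<Rightarrow> lip set) \<Rightarrow> (nat \<Rightarrow> lip set) \<Rightarrow> (nat \<Rightarrow> lip set)" where
  "vadd u v = (\<lambda>i. cadd (u i) (v i))"

definition vweight :: "nat \<Rightarrow> (nat \<Rightarrow> lip set) \<Rightarrow> nat" where
  "vweight n v = (\<Sum>i<n. cweight (v i))"

definition vcoset :: "(nat \<Rightarrow> lip set) set \<Rightarrow> (nat \<Rightarrow> lip set) \<Rightarrow> (nat \<Rightarrow> lip set) set" where
  "vcoset C v = {vadd v c | c. c \<in> C}"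

definition additive_subgroup :: "lip \<Rightarrow> nat \<Rightarrow> (nat \<Rightarrow> lip set) set \<Rightarrow> bool" where
  "additive_subgroup pi n C \<longleftrightarrow> C \<subseteq> Vn pi n \<and> C \<noteq> {} \<and>
     (\<forall>u\<in>C. \<forall>v\<in>C. vadd u v \<in> C) \<and>
     (\<forall>u\<in>C. \<exists>w\<in>C. vadd u w = (\<lambda>i. lclass pi lzero))"

text \<open>(n,k) linear code: quotient H(Z)_pi^n / C has exactly (p^2)^(n-k) cosets.\<close>
definition linear_code :: "lip \<Rightarrow> nat \<Rightarrow> nat \<Rightarrow> nat \<Rightarrow> (nat \<Rightarrow> lip set) set \<Rightarrow> bool" where
  "linear_code pi p n k C \<longleftrightarrow> k \<le> n \<and> additive_subgroup pi n C \<and>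
     card (vcoset C ` Vn pi n) = (p^2)^(n - k)"

definition corrects :: "lip \<Rightarrow> nat \<Rightarrow> nat \<Rightarrow> (nat \<Rightarrow> lip set) set \<Rightarrow> bool" where
  "corrects pi n t C \<longleftrightarrow> (\<forall>u\<in>Vn pi n. \<forall>v\<in>Vn pi n.
     vweight n u \<le> t \<longrightarrow> vweight n v \<le> t \<longrightarrow> u \<noteq> v \<longrightarrow> vcoset C u \<noteq> vcoset C v)"

end

theory Submission
  imports Defs
begin

(* The quaternion norm N(q) = a0^2+a1^2+a2^2+a3^2 is
   multiplicative, and N(q) <= |q|_1^2 with N(q) = |q|_1 (mod 2).  Hence a nonzero
   element of the left ideal H(Z)pi, where N(pi) = p is odd and p >= 11, has norm a
   positive multiple of p and cannot have 1-norm <= 4.  Consequently two Lipschitz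
   integers of weight <= 2 that are right congruent modulo pi are equal.

   Step 2 (sphere packing).  If C corrects all errors of weight <= t, then any set of
   vectors of weight <= t injects into the set of cosets of C.

   We build explicitly a set of 32n^2+8n+1 integer words of
   weight <= 2 (coordinates 0, a unit +-e_i, or an element of weight 2).  By Step 1
   their reductions modulo pi are pairwise distinct vectors of weight <= 2, so by
   Step 2 there are at least that many cosets of C. *)

section \<open>The quaternion norm\<close>

definition Nq :: "lip \<Rightarrow> int" where
  "Nq q = (case q of (a0, a1, a2, a3) \<Rightarrow> a0^2 + a1^2 + a2^2 + a3^2)"

text \<open>Euler's four-square identity: the norm is multiplicative.\<close>
lemma Nq_mult: "Nq (lmult x y) = Nq x * Nq y"
  by (cases x; cases y) (simp add: Nq_def lmult_def power2_eq_square algebra_simps)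

lemma Nq_nonneg: "Nq x \<ge> 0"
  by (cases x) (simp add: Nq_def)

lemma lmult_lconj: "lmult q (lconj q) = (Nq q, 0, 0, 0)"
  by (cases q) (simp add: lmult_def lconj_def Nq_def power2_eq_square)

lemma Nq_eq_0_iff: "Nq q = 0 \<longleftrightarrow> q = lzero"
proof (cases q)
  case (fields a0 a1 a2 a3)
  have "a0^2 \<ge> 0" "a1^2 \<ge> 0" "a2^2 \<ge> 0" "a3^2 \<ge> 0" by simp_all
  then have "a0^2 + a1^2 + a2^2 + a3^2 = 0 \<longleftrightarrow> a0^2 = 0 \<and> a1^2 = 0 \<and> a2^2 = 0 \<and> a3^2 = 0"
    by linarith
  then show ?thesis by (simp add: fields Nq_def lzero_def)
qed

lemma labsw_int: "int (labsw q) = (case q of (a0, a1, a2, a3) \<Rightarrow> \<bar>a0\<bar> + \<bar>a1\<bar> + \<bar>a2\<bar> + \<bar>a3\<bar>)"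
  by (cases q) (simp add: labsw_def)

lemma Nq_le_labsw_sq: "Nq q \<le> int (labsw q)^2"
proof (cases q)
  case (fields x y z w)
  have "(\<bar>x\<bar>+\<bar>y\<bar>+\<bar>z\<bar>+\<bar>w\<bar>)^2 = \<bar>x\<bar>^2+\<bar>y\<bar>^2+\<bar>z\<bar>^2+\<bar>w\<bar>^2
     + 2*(\<bar>x\<bar>*\<bar>y\<bar>+\<bar>x\<bar>*\<bar>z\<bar>+\<bar>x\<bar>*\<bar>w\<bar>+\<bar>y\<bar>*\<bar>z\<bar>+\<bar>y\<bar>*\<bar>w\<bar>+\<bar>z\<bar>*\<bar>w\<bar>)"
    by (simp add: power2_eq_square algebra_simps)
  moreover have "0 \<le> \<bar>x\<bar>*\<bar>y\<bar>+\<bar>x\<bar>*\<bar>z\<bar>+\<bar>x\<bar>*\<bar>w\<bar>+\<bar>y\<bar>*\<bar>z\<bar>+\<bar>y\<bar>*\<bar>w\<bar>+\<bar>z\<bar>*\<bar>w\<bar>"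
    by simp
  ultimately show ?thesis by (simp add: fields Nq_def labsw_int)
qed

text \<open>Since \<open>x\<^sup>2 \<equiv> |x| (mod 2)\<close>, the norm and the weight have the same parity.\<close>
lemma Nq_labsw_parity: "even (Nq q - int (labsw q))"
proof (cases q)
  case (fields a0 a1 a2 a3)
  have sq: "even ((x::int)^2 - \<bar>x\<bar>)" for x
  proof -
    have "x^2 - \<bar>x\<bar> = \<bar>x\<bar> * (\<bar>x\<bar> - 1)" by (simp add: power2_eq_square algebra_simps)
    then show ?thesis by simp
  qed
  have "Nq q - int (labsw q)
      = (a0^2 - \<bar>a0\<bar>) + (a1^2 - \<bar>a1\<bar>) + (a2^2 - \<bar>a2\<bar>) + (a3^2 - \<bar>a3\<bar>)"
    by (simp add: fields Nq_def labsw_int)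
  then show ?thesis using sq by simp
qed

section \<open>Short elements of the ideal generated by pi\<close>

text \<open>A Lipschitz integer of weight at most 4 whose norm is a multiple of an odd
  \<open>p \<ge> 11\<close> is zero: a nonzero multiple would force weight 4 and an even norm, hence
  norm \<open>\<ge> 2p > 16\<close>.\<close>
lemma short_multiple_is_zero:
  assumes weight: "labsw d \<le> 4" and norm: "Nq d = m * int p"
    and "odd p" and "11 \<le> p"
  shows "d = lzero"
proof (rule ccontr)
  assume "d \<noteq> lzero"
  define L where "L = int (labsw d)"
  have "Nq d > 0" using \<open>d \<noteq> lzero\<close> Nq_nonneg[of d] Nq_eq_0_iff[of d] by linarith
  then have "m \<ge> 1" using norm by (simp add: zero_less_mult_iff)
  then have "Nq d \<ge> 1 * 11" unfolding norm
    by (intro mult_mono) (use \<open>11 \<le> p\<close> in simp_all)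
  moreover have "Nq d \<le> L^2" using Nq_le_labsw_sq L_def by simp
  moreover have "0 \<le> L" "L \<le> 4" using weight L_def by simp_all
  moreover have "L^2 \<le> 3^2" if "L \<le> 3" using that \<open>0 \<le> L\<close> by (intro power_mono) simp_all
  ultimately have "L = 4" by fastforce
  then have "Nq d = (Nq d - int (labsw d)) + 2 * 2" using L_def by simp
  then have "even (Nq d)" using Nq_labsw_parity[of d] by (metis dvd_add dvd_triv_left)
  then have "even m" using norm \<open>odd p\<close> by simp
  with \<open>m \<ge> 1\<close> have "m \<ge> 2" by presburger
  then have "Nq d \<ge> 2 * 11" unfolding norm
    by (intro mult_mono) (use \<open>11 \<le> p\<close> in simp_all)
  moreover have "Nq d \<le> 16" using \<open>Nq d \<le> L^2\<close> \<open>L = 4\<close> by simp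
  ultimately show False by simp
qed

lemma labsw_diff_le: "labsw (ladd a (lneg b)) \<le> labsw a + labsw b"
proof -
  obtain a0 a1 a2 a3 b0 b1 b2 b3 where "a = (a0, a1, a2, a3)" "b = (b0, b1, b2, b3)"
    by (cases a; cases b) auto
  moreover have "\<bar>a0 - b0\<bar> + \<bar>a1 - b1\<bar> + \<bar>a2 - b2\<bar> + \<bar>a3 - b3\<bar>
      \<le> (\<bar>a0\<bar> + \<bar>b0\<bar>) + (\<bar>a1\<bar> + \<bar>b1\<bar>) + (\<bar>a2\<bar> + \<bar>b2\<bar>) + (\<bar>a3\<bar> + \<bar>b3\<bar>)"
    by (intro add_mono abs_triangle_ineq4)
  ultimately have "int (labsw (ladd a (lneg b))) \<le> int (labsw a) + int (labsw b)"
    by (simp add: ladd_def lneg_def labsw_int)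
  then show ?thesis by linarith
qed

lemma ladd_lneg_zero: "ladd a (lneg b) = lzero \<Longrightarrow> a = b"
  by (cases a; cases b) (simp add: ladd_def lneg_def lzero_def)

lemma small_rcong_eq:
  assumes "Nq pi = int p" "odd p" "11 \<le> p"
    and "labsw a \<le> 2" "labsw b \<le> 2" and "rcong pi a b"
  shows "a = b"
proof -
  obtain \<delta> where \<delta>: "ladd a (lneg b) = lmult \<delta> pi"
    using \<open>rcong pi a b\<close> unfolding rcong_def by blast
  have "labsw (ladd a (lneg b)) \<le> 4" using labsw_diff_le[of a b] assms(4,5) by simp
  moreover have "Nq (ladd a (lneg b)) = Nq \<delta> * int p" using \<delta> Nq_mult assms(1) by simp
  ultimately have "ladd a (lneg b) = lzero"
    using short_multiple_is_zero assms(2,3) by blast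
  then show ?thesis by (rule ladd_lneg_zero)
qed

lemma lclass_self: "q \<in> lclass pi q"
  unfolding lclass_def rcong_def
  by (rule CollectI, rule exI[of _ "(0, 0, 0, 0)"], cases q, cases pi)
     (simp add: ladd_def lneg_def lmult_def)

lemma cweight_lclass_le: "cweight (lclass pi q) \<le> labsw q"
  unfolding cweight_def by (rule Least_le) (use lclass_self in blast)

lemma lclass_inj_small:
  assumes "Nq pi = int p" "odd p" "11 \<le> p"
    and "labsw a \<le> 2" "labsw b \<le> 2" and "lclass pi a = lclass pi b"
  shows "a = b"
proof -
  have "rcong pi a b" using lclass_self[of a pi] assms(6) unfolding lclass_def by blast
  then show ?thesis using small_rcong_eq assms(1-5) by blast
qed

section \<open>The sphere-packing bound\<close>

lemma corrects_card_le:
  assumes "corrects pi n t C" and "finite (vcoset C ` Vn pi n)"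
    and "A \<subseteq> Vn pi n" and "\<And>v. v \<in> A \<Longrightarrow> vweight n v \<le> t"
  shows "card A \<le> card (vcoset C ` Vn pi n)"
proof (rule card_inj_on_le)
  show "inj_on (vcoset C) A"
    using assms(1,3,4) unfolding corrects_def inj_on_def by blast
qed (use assms(2,3) in auto)

section \<open>An explicit family of words of weight at most 2\<close>

definition weight1 :: "lip set" where
  "weight1 = {(1,0,0,0),(-1,0,0,0),(0,1,0,0),(0,-1,0,0),(0,0,1,0),(0,0,-1,0),(0,0,0,1),(0,0,0,-1)}"

definition weight2 :: "lip set" where
  "weight2 = {(2,0,0,0),(-2,0,0,0),(0,2,0,0),(0,-2,0,0),(0,0,2,0),(0,0,-2,0),(0,0,0,2),(0,0,0,-2),
    (1,1,0,0),(1,-1,0,0),(-1,1,0,0),(-1,-1,0,0),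
    (1,0,1,0),(1,0,-1,0),(-1,0,1,0),(-1,0,-1,0),
    (1,0,0,1),(1,0,0,-1),(-1,0,0,1),(-1,0,0,-1),
    (0,1,1,0),(0,1,-1,0),(0,-1,1,0),(0,-1,-1,0),
    (0,1,0,1),(0,1,0,-1),(0,-1,0,1),(0,-1,0,-1),
    (0,0,1,1),(0,0,1,-1),(0,0,-1,1),(0,0,-1,-1)}"

lemma weight1_facts: "finite weight1" "card weight1 = 8" "q \<in> weight1 \<Longrightarrow> labsw q = 1"
  by (auto simp: weight1_def labsw_def)

lemma weight2_facts: "finite weight2" "card weight2 = 32" "q \<in> weight2 \<Longrightarrow> labsw q = 2"
  by (auto simp: weight2_def labsw_def)

lemma labsw_lzero: "labsw lzero = 0"
  by (simp add: lzero_def labsw_def)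

text \<open>The new coordinate \<open>n\<close> is written into a word vanishing there.\<close>
fun words :: "nat \<Rightarrow> nat \<Rightarrow> (nat \<Rightarrow> lip) set" where
  "words 0 w = {\<lambda>_. lzero}"
| "words (Suc n) w = (\<lambda>(a, g). g(n := a)) `
      ({lzero} \<times> words n w
       \<union> (if 1 \<le> w then weight1 \<times> words n (w - 1) else {})
       \<union> (if 2 \<le> w then weight2 \<times> words n (w - 2) else {}))"

lemma words_support_weight:
  "f \<in> words n w \<Longrightarrow> (\<forall>i\<ge>n. f i = lzero) \<and> (\<Sum>i<n. labsw (f i)) \<le> w"
proof (induction n arbitrary: f w)
  case (Suc n)
  then obtain x where "f = (\<lambda>(a, g). g(n := a)) x"
    and x: "x \<in> {lzero} \<times> words n w
       \<union> (if 1 \<le> w then weight1 \<times> words n (w - 1) else {})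
       \<union> (if 2 \<le> w then weight2 \<times> words n (w - 2) else {})"
    using Suc.prems unfolding words.simps by blast
  moreover obtain a g where "x = (a, g)" by (cases x)
  ultimately have f: "f = g(n := a)"
    and cases: "(a = lzero \<and> g \<in> words n w) \<or> (1 \<le> w \<and> a \<in> weight1 \<and> g \<in> words n (w - 1))
                \<or> (2 \<le> w \<and> a \<in> weight2 \<and> g \<in> words n (w - 2))"
    by (simp_all split: if_splits)
  have weight: "(\<Sum>i<Suc n. labsw (f i)) = (\<Sum>i<n. labsw (g i)) + labsw a"
    using f by (simp add: sum.lessThan_Suc)
  from cases show ?case
  proof (elim disjE conjE)
    assume "a = lzero" "g \<in> words n w"
    then show ?thesis using Suc.IH[of g w] weight f labsw_lzero by auto
  next
    assume "1 \<le> w" "a \<in> weight1" "g \<in> words n (w - 1)"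
    then show ?thesis using Suc.IH[of g "w - 1"] weight f weight1_facts(3) by auto
  next
    assume "2 \<le> w" "a \<in> weight2" "g \<in> words n (w - 2)"
    then show ?thesis using Suc.IH[of g "w - 2"] weight f weight2_facts(3) by auto
  qed
qed simp

lemma words_finite: "finite (words n w)"
  by (induction n arbitrary: w) (simp_all add: weight1_facts(1) weight2_facts(1))

lemma fun_upd_inj: "inj_on (\<lambda>(a, g). g(n := a)) (UNIV \<times> {g. g n = c})"
proof (rule inj_onI)
  fix x y assume "x \<in> UNIV \<times> {g. g n = c}" "y \<in> UNIV \<times> {g. g n = c}"
    and "(\<lambda>(a, g). g(n := a)) x = (\<lambda>(a, g). g(n := a)) y"
  then show "x = y"
    by (cases x; cases y; simp) (metis fun_upd_same fun_upd_triv fun_upd_upd)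
qed

lemma words_card_Suc:
  "card (words (Suc n) w) = card (words n w)
     + (if 1 \<le> w then 8 * card (words n (w - 1)) else 0)
     + (if 2 \<le> w then 32 * card (words n (w - 2)) else 0)"
proof -
  define X1 where "X1 = {lzero} \<times> words n w"
  define X2 where "X2 = (if 1 \<le> w then weight1 \<times> words n (w - 1) else {})"
  define X3 where "X3 = (if 2 \<le> w then weight2 \<times> words n (w - 2) else {})"
  have fin: "finite X1" "finite X2" "finite X3"
    unfolding X1_def X2_def X3_def using words_finite weight1_facts(1) weight2_facts(1) by simp_all
  have "X1 \<union> X2 \<union> X3 \<subseteq> UNIV \<times> {g. g n = lzero}"
    unfolding X1_def X2_def X3_def using words_support_weight by (auto split: if_splits)
  then have "card (words (Suc n) w) = card (X1 \<union> X2 \<union> X3)"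
    unfolding X1_def X2_def X3_def words.simps
    by (intro card_image inj_on_subset[OF fun_upd_inj]) simp_all
  also have "\<dots> = card X1 + card X2 + card X3"
  proof -
    have "lzero \<notin> weight1" "lzero \<notin> weight2"
      by (simp_all add: weight1_def weight2_def lzero_def)
    moreover have "weight1 \<inter> weight2 = {}"
      using weight1_facts(3) weight2_facts(3) by fastforce
    ultimately have "X1 \<inter> X2 = {}" "(X1 \<union> X2) \<inter> X3 = {}"
      unfolding X1_def X2_def X3_def by auto
    then show ?thesis using fin by (simp add: card_Un_disjoint)
  qed
  finally show ?thesis
    unfolding X1_def X2_def X3_def
    by (simp add: card_cartesian_product weight1_facts(2) weight2_facts(2))
qed

lemma words_card_0: "card (words n 0) = 1"
  by (induction n) (simp_all only: words_card_Suc, simp_all)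

lemma words_card_1: "card (words n 1) = 8 * n + 1"
  by (induction n) (simp_all only: words_card_Suc, simp_all add: words_card_0)

lemma words_card_2: "card (words n 2) = 32 * n^2 + 8 * n + 1"
  by (induction n)
    (simp_all only: words_card_Suc,
     simp_all add: words_card_0 words_card_1[simplified] power2_eq_square algebra_simps)

definition reduce :: "lip \<Rightarrow> (nat \<Rightarrow> lip) \<Rightarrow> (nat \<Rightarrow> lip set)" where
  "reduce pi f = (\<lambda>i. lclass pi (f i))"

lemma reduce_words:
  assumes "f \<in> words n w"
  shows "reduce pi f \<in> Vn pi n" and "vweight n (reduce pi f) \<le> w"
proof -
  show "reduce pi f \<in> Vn pi n"
    using words_support_weight[OF assms] unfolding Vn_def Hpi_def reduce_def by auto
  have "vweight n (reduce pi f) \<le> (\<Sum>i<n. labsw (f i))"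
    unfolding vweight_def reduce_def by (rule sum_mono) (rule cweight_lclass_le)
  then show "vweight n (reduce pi f) \<le> w" using words_support_weight[OF assms] by simp
qed

text \<open>Every letter of a word of total weight \<open>\<le> 2\<close> has weight \<open>\<le> 2\<close>, so by
  \<open>lclass_inj_small\<close> reduction is injective on these words.\<close>
lemma reduce_inj_words2:
  assumes "Nq pi = int p" "odd p" "11 \<le> p"
  shows "inj_on (reduce pi) (words n 2)"
proof (rule inj_onI)
  have letter: "labsw (f i) \<le> 2" if "f \<in> words n 2" for f i
  proof (cases "i < n")
    case True
    have "labsw (f i) \<le> (\<Sum>j<n. labsw (f j))" by (rule member_le_sum) (use True in auto)
    then show ?thesis using words_support_weight[OF that] by simp
  qed (use words_support_weight[OF that] labsw_lzero in simp)
  fix f g assume "f \<in> words n 2" "g \<in> words n 2" "reduce pi f = reduce pi g"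
  then show "f = g"
    using lclass_inj_small[OF assms] letter unfolding reduce_def fun_eq_iff by metis
qed

theorem theorem10:
  fixes pi :: lip and p n k :: nat and C :: "(nat \<Rightarrow> lip set) set"
  assumes "lmult pi (lconj pi) = (int p, 0, 0, 0)"
    and "prime p" and "p \<ge> 13"
    and "linear_code pi p n k C"
    and "corrects pi n 2 C"
  shows "(p^2)^(n - k) \<ge> 32 * n^2 + 8 * n + 1"
proof -
  have norm: "Nq pi = int p" using assms(1) lmult_lconj[of pi] by simp
  have "odd p" using assms(2,3) prime_odd_nat by simp
  have cosets: "card (vcoset C ` Vn pi n) = (p^2)^(n - k)"
    using assms(4) unfolding linear_code_def by simp
  then have "finite (vcoset C ` Vn pi n)" using assms(3) by (intro card_ge_0_finite) simp
  then have "card (reduce pi ` words n 2) \<le> card (vcoset C ` Vn pi n)"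
    by (rule corrects_card_le[OF assms(5)]) (use reduce_words in blast)+
  moreover have "card (reduce pi ` words n 2) = 32 * n^2 + 8 * n + 1"
    using card_image[OF reduce_inj_words2] norm \<open>odd p\<close> assms(3) words_card_2 by simp
  ultimately show ?thesis using cosets by simp
qed

end
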